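(* In the setting described in the context, assume $G$ satisfies Condition 1. Then $$\sum_{t=0}^{\infty}\alpha(t)\sum_{j=1}^{n-\phi}\pi_j(t+1)\,|y(t)-x_j(t)|<\infty.$$
   Context: A synchronous system of $n$ agents communicates over a directed graph $G=(\mathcal{V},\mathcal{E})$, $\mathcal{V}=\{1,\dots,n\}$, without self-loops; $N_i^-=\{j:(j,i)\in\mathcal{E}\}$. At most $f$ agents are Byzantine faulty (may send arbitrary, possibly inconsistent values); $\mathcal{F}$ is the set of faulty agents, $\phi=|\mathcal{F}|\le f$, non-faulty agents indexed $1,\dots,n-\phi$. Assignment matrix $\mathbf{A}\in\mathbb{R}^{k\times n}$: nonnegative entries, columns summing to $1$; agent $i$ holds $g_i=\sum_{j=1}^k\mathbf{A}_{ji}h_j$ for admissible (convex, $L$-Lipschitz, nonempty compact argmin) $h_1,\dots,h_k:\mathbb{R}\to\mathbb{R}$. Sparsity parameter $sp(\mathbf{A})$: smallest $s$ such that the sum of any $s$ columns of $\mathbf{A}$ is component-wise positive ($n+1$ if the sum of all columns is not). Reduced graph w.r.t. $\mathcal{F}$: subgraph of $G$ obtained by removing the nodes of $\mathcal{F}$ with their edges and then up to $f$ additional incoming edges at each remaining node; $R_{\mathcal{F}}$ the set of reduced graphs, $\tau=|R_{\mathcal{F}}|$. Source component: set of nodes each having a directed path to every other node of the graph. Condition 1: for every $\mathcal{F}'\subseteq\mathcal{V}$ with $|\mathcal{F}'|\le f$, every reduced graph w.r.t. $\mathcal{F}'$ has a source component with at least $\max\{f+1,sp(\mathbf{A})\}$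 nodes. Step sizes: $\alpha(t)\ge0$ with $\alpha(t+1)\le\alpha(t)$, $\sum_t\alpha(t)=\infty$, $\sum_t\alpha^2(t)<\infty$. Algorithm 2: arbitrary $x_i(0)$; in iteration $t\ge1$ non-faulty agent $i$ sends $x_i(t-1)$ to all out-neighbors, receives $|N_i^-|$ values (default for missing), discards the $f$ smallest and $f$ largest, lets $N_i^*(t)$ be the senders of the remaining values with values $w_j$, sets $w_i=x_i(t-1)$, and updates $x_i(t)=\frac{1}{|N_i^*(t)|+1}\sum_{j\in\{i\}\cup N_i^*(t)}w_j-\alpha(t-1)d_i(t-1)$, $d_i(t-1)$ a subgradient of $g_i$ at $x_i(t-1)$. Known facts: with $\mathbf{x}(t)$ the non-faulty states and $\mathbf{d}(t)=(d_1(t),\dots,d_{n-\phi}(t))$, $\mathbf{x}(t+1)=\mathbf{M}(t)\mathbf{x}(t)-\alpha(t)\mathbf{d}(t)$ with row-stochastic $\mathbf{M}(t)$, and there is $0<\beta<1$ with $\mathbf{M}(t)\ge\beta\mathbf{H}(t)$ entrywise for the adjacency matrix $\mathbf{H}(t)$ (including diagonal ones) of some reduced graph in $R_{\mathcal{F}}$. Let $\Phi(t,r)=\mathbf{M}(t)\cdots\mathbf{M}(r)$ for $t\ge r$, $\Phi(t,t+1)=I$, $\nu=\tau(n-\phi)$, $\gamma=1-\beta^\nu$. Under Condition 1, for each $r$, $\lim_{t\to\infty}\Phi(t,r)=\mathbf{1}\pi(r)$ for a stochastic row vector $\pi(r)=(\pi_1(r),\dots,\pi_{n-\phi}(r))$,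 and $|\Phi_{ij}(t,r)-\pi_j(r)|\le\gamma^{\lceil (t-r+1)/\nu\rceil}$ for all $t\ge r$. Define $y(t)=\sum_{j=1}^{n-\phi}\pi_j(0)x_j(0)-\sum_{r=1}^{t}\alpha(r-1)\sum_{j=1}^{n-\phi}\pi_j(r)d_j(r-1)$. *)

theory Defs
  imports "HOL-Analysis.Analysis"
begin

text \<open>Square matrices on the index set {0..<m} are functions nat => nat => real.\<close>

definition idmat :: "nat \<Rightarrow> nat \<Rightarrow> real" where
  "idmat i j = (if i = j then 1 else 0)"

definition matmul :: "nat \<Rightarrow> (nat \<Rightarrow> nat \<Rightarrow> real) \<Rightarrow> (nat \<Rightarrow> nat \<Rightarrow> real) \<Rightarrow> nat \<Rightarrow> nat \<Rightarrow> real" where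
  "matmul m P Q i j = (\<Sum>k<m. P i k * Q k j)"

fun prodM :: "nat \<Rightarrow> (nat \<Rightarrow> nat \<Rightarrow> nat \<Rightarrow> real) \<Rightarrow> nat \<Rightarrow> nat \<Rightarrow> nat \<Rightarrow> nat \<Rightarrow> real" where
  "prodM m M r 0 = idmat"
| "prodM m M r (Suc l) = matmul m (M (r + l)) (prodM m M r l)"

text \<open>Phi(t,r) = M(t) ... M(r) for t >= r, and Phi(t,t+1) = I.\<close>
definition Phi :: "nat \<Rightarrow> (nat \<Rightarrow> nat \<Rightarrow> nat \<Rightarrow> real) \<Rightarrow> nat \<Rightarrow> nat \<Rightarrow> nat \<Rightarrow> nat \<Rightarrow> real" where
  "Phi m M t r = prodM m M r (t + 1 - r)"

definition row_stochastic :: "nat \<Rightarrow> (nat \<Rightarrow> nat \<Rightarrow> real) \<Rightarrow> bool" where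
  "row_stochastic m P \<longleftrightarrow> (\<forall>i<m. (\<forall>j<m. 0 \<le> P i j) \<and> (\<Sum>j<m. P i j) = 1)"

definition stochastic_vec :: "nat \<Rightarrow> (nat \<Rightarrow> real) \<Rightarrow> bool" where
  "stochastic_vec m p \<longleftrightarrow> (\<forall>j<m. 0 \<le> p j) \<and> (\<Sum>j<m. p j) = 1"

definition admissible :: "real \<Rightarrow> (real \<Rightarrow> real) \<Rightarrow> bool" where
  "admissible L h \<longleftrightarrow> convex_on UNIV h \<and> L-lipschitz_on UNIV h \<and>
     {z. \<forall>w. h z \<le> h w} \<noteq> {} \<and> compact {z. \<forall>w. h z \<le> h w}"

definition subgradient :: "(real \<Rightarrow> real) \<Rightarrow> real \<Rightarrow> real \<Rightarrow> bool" where
  "subgradient g x0 d \<longleftrightarrow> (\<forall>z. g x0 + d * (z - x0) \<le> g z)"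

end

theory Submission
  imports Defs
begin

text \<open>Unrolling the iteration gives
  \<open>x(t) = \<Phi>(t-1,0) x(0) - \<Sigma>\<^sub>r \<alpha>(r-1) \<Phi>(t-1,r) d(r-1)\<close>, and \<open>y(t)\<close> is the same expression with
  every row of \<open>\<Phi>(t-1,r)\<close> replaced by \<open>\<pi>(r)\<close>. The rows converge geometrically with ratio
  \<open>\<rho> = \<gamma>\<^bsup>1/\<nu>\<^esup>\<close>, and subgradients of \<open>L\<close>-Lipschitz functions are bounded by \<open>L\<close>, so
  \<open>|y(t) - x\<^sub>j(t)| \<le> \<rho>\<^sup>t \<Sigma>\<^sub>i |x\<^sub>i(0)| + m L \<Sigma>\<^sub>r \<alpha>(r-1) \<rho>\<^bsup>t-r\<^esup>\<close>. Multiplying by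
  \<open>\<alpha>(t) \<le> \<alpha>(r-1)\<close> bounds the summand by a geometric sequence plus the convolution of
  \<open>\<alpha>\<^sup>2\<close> with \<open>\<rho>\<^sup>t\<close>, and both are summable.\<close>

lemma sum_matmul:
  "(\<Sum>j<m. P i j * (\<Sum>l<m. Q j l * v l)) = (\<Sum>l<m. matmul m P Q i l * v l)"
proof -
  have "(\<Sum>j<m. P i j * (\<Sum>l<m. Q j l * v l)) = (\<Sum>j<m. \<Sum>l<m. P i j * Q j l * v l)"
    by (simp add: sum_distrib_left mult.assoc)
  also have "\<dots> = (\<Sum>l<m. matmul m P Q i l * v l)"
    by (subst sum.swap) (simp add: matmul_def sum_distrib_right)
  finally show ?thesis .
qed

lemma sum_idmat: "i < m \<Longrightarrow> (\<Sum>j<m. idmat i j * v j) = v i"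
  unfolding idmat_def by (subst sum.remove[of _ i]) auto

lemma linear_recursion_closed_form:
  fixes x u :: "nat \<Rightarrow> nat \<Rightarrow> real"
  assumes rec: "\<And>t i. i < m \<Longrightarrow> x (Suc t) i = (\<Sum>j<m. M t i j * x t j) + u t i"
    and i: "i < m"
  shows "x t i = (\<Sum>j<m. prodM m M 0 t i j * x 0 j)
     + (\<Sum>r\<in>{1..t}. \<Sum>j<m. prodM m M r (t - r) i j * u (r - 1) j)"
  using i
proof (induction t arbitrary: i)
  case 0
  then show ?case by (simp add: sum_idmat)
next
  case (Suc t)
  have step: "prodM m M r (Suc t - r) = matmul m (M t) (prodM m M r (t - r))" if "r \<in> {1..t}" for r
    using that by (simp add: Suc_diff_le)
  have "x (Suc t) i = (\<Sum>j<m. M t i j * (\<Sum>l<m. prodM m M 0 t j l * x 0 l))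
      + (\<Sum>r\<in>{1..t}. \<Sum>j<m. M t i j * (\<Sum>l<m. prodM m M r (t - r) j l * u (r - 1) l)) + u t i"
    using Suc by (simp add: rec distrib_left sum_distrib_left sum.distrib sum.swap[of _ "{..<m}" "{Suc 0..t}"])
  also have "\<dots> = (\<Sum>j<m. prodM m M 0 (Suc t) i j * x 0 j)
      + (\<Sum>r\<in>{1..t}. \<Sum>j<m. prodM m M r (Suc t - r) i j * u (r - 1) j)
      + (\<Sum>j<m. prodM m M (Suc t) 0 i j * u t j)"
    using Suc.prems by (simp add: sum_matmul step sum_idmat)
  finally show ?case by simp
qed

lemma lipschitz_on_weighted_sum:
  fixes f :: "'i \<Rightarrow> 'a::metric_space \<Rightarrow> real"
  assumes "finite S" "\<And>j. j \<in> S \<Longrightarrow> 0 \<le> w j" "\<And>j. j \<in> S \<Longrightarrow> L-lipschitz_on X (f j)"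
  shows "(\<Sum>j\<in>S. w j * L)-lipschitz_on X (\<lambda>z. \<Sum>j\<in>S. w j * f j z)"
  using assms by (induction S rule: finite_induct) (auto intro!: lipschitz_intros)

lemma subgradient_abs_le_lipschitz:
  assumes lip: "L-lipschitz_on UNIV g" and sg: "subgradient g x0 d"
  shows "\<bar>d\<bar> \<le> L"
proof -
  have "d * (z - x0) \<le> L * \<bar>z - x0\<bar>" for z
  proof -
    have "g x0 + d * (z - x0) \<le> g z" using sg by (simp add: subgradient_def)
    moreover have "\<bar>g z - g x0\<bar> \<le> L * \<bar>z - x0\<bar>"
      using lipschitz_onD[OF lip] by (simp add: dist_real_def)
    ultimately show ?thesis by linarith
  qed
  from this[of "x0 + 1"] this[of "x0 - 1"] show ?thesis by simp
qed

lemma power_ceiling_div_le_root_power: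
  fixes \<gamma> :: real and l \<nu> :: nat
  assumes "0 \<le> \<gamma>" "\<gamma> \<le> 1" "0 < \<nu>"
  shows "\<gamma> ^ nat \<lceil>real l / real \<nu>\<rceil> \<le> root \<nu> \<gamma> ^ l"
proof -
  define c where "c = nat \<lceil>real l / real \<nu>\<rceil>"
  have "real l / real \<nu> \<le> real c"
    unfolding c_def by linarith
  then have "l \<le> \<nu> * c"
    using assms(3) by (simp add: divide_le_eq mult.commute flip: of_nat_mult)
  have "\<gamma> ^ c = root \<nu> \<gamma> ^ (\<nu> * c)"
    using assms by (simp add: power_mult)
  also have "\<dots> \<le> root \<nu> \<gamma> ^ l"
    using \<open>l \<le> \<nu> * c\<close> assms by (intro power_decreasing) auto
  finally show ?thesis unfolding c_def .
qed

lemma stochastic_vec_bounds: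
  assumes "stochastic_vec m p" "j < m"
  shows "0 \<le> p j" "p j \<le> 1"
proof -
  show "0 \<le> p j" using assms by (simp add: stochastic_vec_def)
  have "p j \<le> (\<Sum>i<m. p i)"
    using assms by (intro member_le_sum) (auto simp: stochastic_vec_def)
  then show "p j \<le> 1" using assms(1) by (simp add: stochastic_vec_def)
qed

lemma stochastic_vec_weighted_le:
  assumes p: "stochastic_vec m p" and f: "\<And>j. j < m \<Longrightarrow> f j \<le> c"
  shows "(\<Sum>j<m. p j * f j) \<le> c"
proof -
  have "(\<Sum>j<m. p j * f j) \<le> (\<Sum>j<m. p j * c)"
    using f stochastic_vec_bounds[OF p] by (intro sum_mono mult_left_mono) auto
  also have "\<dots> = c" using p by (simp add: stochastic_vec_def flip: sum_distrib_right)
  finally show ?thesis .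
qed

lemma prodM_converges_geometrically:
  fixes \<pi> :: "nat \<Rightarrow> nat \<Rightarrow> real"
  assumes rate: "\<forall>r t. r \<le> t \<longrightarrow> (\<forall>i<m. \<forall>j<m.
         \<bar>Phi m M t r i j - \<pi> r j\<bar> \<le> \<gamma> ^ nat \<lceil>real (t - r + 1) / real \<nu>\<rceil>)"
    and \<pi>: "stochastic_vec m (\<pi> r)"
    and \<gamma>: "0 \<le> \<gamma>" "\<gamma> \<le> 1" and \<nu>: "0 < \<nu>" and ij: "i < m" "j < m"
  shows "\<bar>prodM m M r l i j - \<pi> r j\<bar> \<le> root \<nu> \<gamma> ^ l"
proof (cases l)
  case 0
  then show ?thesis
    using stochastic_vec_bounds[OF \<pi> ij(2)] by (auto simp: idmat_def)
next
  case (Suc l')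
  have "\<bar>Phi m M (r + l') r i j - \<pi> r j\<bar> \<le> \<gamma> ^ nat \<lceil>real (r + l' - r + 1) / real \<nu>\<rceil>"
    using rate ij le_add1 by blast
  also have "\<dots> \<le> root \<nu> \<gamma> ^ l"
    using power_ceiling_div_le_root_power[OF \<gamma> \<nu>, of l] Suc by simp
  finally show ?thesis using Suc by (simp add: Phi_def)
qed

lemma abs_sum_mult_le:
  fixes a v :: "nat \<Rightarrow> real"
  assumes "\<And>i. i < m \<Longrightarrow> \<bar>a i\<bar> \<le> c"
  shows "\<bar>\<Sum>i<m. a i * v i\<bar> \<le> c * (\<Sum>i<m. \<bar>v i\<bar>)"
proof -
  have "\<bar>\<Sum>i<m. a i * v i\<bar> \<le> (\<Sum>i<m. \<bar>a i\<bar> * \<bar>v i\<bar>)"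
    using sum_abs[of "\<lambda>i. a i * v i"] by (simp add: abs_mult)
  also have "\<dots> \<le> (\<Sum>i<m. c * \<bar>v i\<bar>)"
    using assms by (intro sum_mono mult_right_mono) auto
  finally show ?thesis by (simp add: sum_distrib_left)
qed

lemma consensus_deviation_bound:
  fixes x d :: "nat \<Rightarrow> nat \<Rightarrow> real" and \<pi> :: "nat \<Rightarrow> nat \<Rightarrow> real"
  assumes dyn: "\<forall>t. \<forall>i<m. x (Suc t) i = (\<Sum>j<m. M t i j * x t j) - \<alpha> t * d t i"
    and rate: "\<And>r l i j. i < m \<Longrightarrow> j < m \<Longrightarrow> \<bar>prodM m M r l i j - \<pi> r j\<bar> \<le> \<rho> ^ l"
    and d_bound: "\<And>t i. i < m \<Longrightarrow> \<bar>d t i\<bar> \<le> L"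
    and \<alpha>_nonneg: "\<And>t. 0 \<le> \<alpha> t"
    and j: "j < m"
  shows "\<bar>(\<Sum>i<m. \<pi> 0 i * x 0 i) - (\<Sum>r\<in>{1..t}. \<alpha> (r - 1) * (\<Sum>i<m. \<pi> r i * d (r - 1) i))
           - x t j\<bar>
    \<le> \<rho> ^ t * (\<Sum>i<m. \<bar>x 0 i\<bar>) + real m * L * (\<Sum>r\<in>{1..t}. \<alpha> (r - 1) * \<rho> ^ (t - r))"
proof -
  define P where "P r l i = \<pi> r i - prodM m M r l j i" for r l i
  have P: "\<bar>P r l i\<bar> \<le> \<rho> ^ l" if "i < m" for r l i
    using rate[OF j that] by (simp only: P_def abs_minus_commute)
  have "x t j = (\<Sum>i<m. prodM m M 0 t j i * x 0 i)
      + (\<Sum>r\<in>{1..t}. \<Sum>i<m. prodM m M r (t - r) j i * - (\<alpha> (r - 1) * d (r - 1) i))"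
    using dyn j by (intro linear_recursion_closed_form) auto
  then have deviation: "(\<Sum>i<m. \<pi> 0 i * x 0 i)
      - (\<Sum>r\<in>{1..t}. \<alpha> (r - 1) * (\<Sum>i<m. \<pi> r i * d (r - 1) i)) - x t j
    = (\<Sum>i<m. P 0 t i * x 0 i) - (\<Sum>r\<in>{1..t}. \<alpha> (r - 1) * (\<Sum>i<m. P r (t - r) i * d (r - 1) i))"
    by (simp add: P_def left_diff_distrib right_diff_distrib sum_subtractf sum_distrib_left sum_negf
        mult.left_commute)
  have initial: "\<bar>\<Sum>i<m. P 0 t i * x 0 i\<bar> \<le> \<rho> ^ t * (\<Sum>i<m. \<bar>x 0 i\<bar>)"
    using P by (rule abs_sum_mult_le)
  have step_bound: "\<bar>\<Sum>i<m. P r (t - r) i * d (r - 1) i\<bar> \<le> \<rho> ^ (t - r) * (real m * L)" for r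
  proof -
    have "0 \<le> \<rho> ^ (t - r)" using P[OF j] by (rule order_trans[OF abs_ge_zero])
    moreover have "(\<Sum>i<m. \<bar>d (r - 1) i\<bar>) \<le> real m * L"
      using sum_mono[of "{..<m}" "\<lambda>i. \<bar>d (r - 1) i\<bar>" "\<lambda>_. L"] d_bound by simp
    ultimately show ?thesis
      using abs_sum_mult_le[of m "P r (t - r)" _ "d (r - 1)"] P
      by (meson mult_left_mono order_trans)
  qed
  have accumulated: "\<bar>\<Sum>r\<in>{1..t}. \<alpha> (r - 1) * (\<Sum>i<m. P r (t - r) i * d (r - 1) i)\<bar>
      \<le> real m * L * (\<Sum>r\<in>{1..t}. \<alpha> (r - 1) * \<rho> ^ (t - r))"
  proof -
    have "\<bar>\<Sum>r\<in>{1..t}. \<alpha> (r - 1) * (\<Sum>i<m. P r (t - r) i * d (r - 1) i)\<bar>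
        \<le> (\<Sum>r\<in>{1..t}. \<alpha> (r - 1) * \<bar>\<Sum>i<m. P r (t - r) i * d (r - 1) i\<bar>)"
      by (rule order_trans[OF sum_abs]) (simp add: abs_mult \<alpha>_nonneg)
    also have "\<dots> \<le> (\<Sum>r\<in>{1..t}. \<alpha> (r - 1) * (\<rho> ^ (t - r) * (real m * L)))"
      using step_bound \<alpha>_nonneg by (intro sum_mono mult_left_mono)
    finally show ?thesis by (simp add: sum_distrib_left mult_ac)
  qed
  show ?thesis
    unfolding deviation by (rule order_trans[OF abs_triangle_ineq4 add_mono[OF initial accumulated]])
qed

lemma summable_mult_geometric_convolution:
  fixes \<alpha> :: "nat \<Rightarrow> real"
  assumes \<alpha>_nonneg: "\<And>t. 0 \<le> \<alpha> t" and \<alpha>_antimono: "\<And>t. \<alpha> (Suc t) \<le> \<alpha> t"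
    and \<alpha>_sq: "summable (\<lambda>t. (\<alpha> t)\<^sup>2)" and \<rho>: "0 \<le> \<rho>" "\<rho> < 1"
  shows "summable (\<lambda>t. \<alpha> t * (\<Sum>r\<in>{1..t}. \<alpha> (r - 1) * \<rho> ^ (t - r)))"
proof (rule summable_comparison_test'[where N = 0])
  define D where "D t = (\<Sum>r\<in>{1..t}. (\<alpha> (r - 1))\<^sup>2 * \<rho> ^ (t - r))" for t
  have "D (Suc t) = (\<Sum>s\<le>t. (\<alpha> s)\<^sup>2 * \<rho> ^ (t - s))" for t
    unfolding D_def atMost_atLeast0 One_nat_def sum.shift_bounds_cl_Suc_ivl by simp
  moreover have "summable (\<lambda>t. \<Sum>s\<le>t. (\<alpha> s)\<^sup>2 * \<rho> ^ (t - s))"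
    using \<alpha>_sq \<rho> by (intro summable_Cauchy_product) (simp_all add: summable_geometric)
  ultimately show "summable D"
    using summable_Suc_iff[of D] by simp
  fix t
  have "\<alpha> t * \<alpha> (r - 1) * \<rho> ^ (t - r) \<le> (\<alpha> (r - 1))\<^sup>2 * \<rho> ^ (t - r)" if "r \<in> {1..t}" for r
  proof -
    have "r - 1 \<le> t" using that by auto
    then have "\<alpha> t \<le> \<alpha> (r - 1)" by (rule lift_Suc_antimono_le[of \<alpha>, OF \<alpha>_antimono])
    then show ?thesis
      using \<alpha>_nonneg \<rho> by (simp add: power2_eq_square mult_right_mono)
  qed
  then have "\<alpha> t * (\<Sum>r\<in>{1..t}. \<alpha> (r - 1) * \<rho> ^ (t - r)) \<le> D t"
    unfolding D_def sum_distrib_left mult.assoc[symmetric] by (rule sum_mono)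
  moreover have "0 \<le> \<alpha> t * (\<Sum>r\<in>{1..t}. \<alpha> (r - 1) * \<rho> ^ (t - r))"
    using \<alpha>_nonneg \<rho> by (simp add: sum_nonneg)
  ultimately show "norm (\<alpha> t * (\<Sum>r\<in>{1..t}. \<alpha> (r - 1) * \<rho> ^ (t - r))) \<le> D t"
    by simp
qed

lemma summable_weighted_deviation:
  fixes \<alpha> :: "nat \<Rightarrow> real" and e p :: "nat \<Rightarrow> nat \<Rightarrow> real"
  assumes \<alpha>_nonneg: "\<And>t. 0 \<le> \<alpha> t" and \<alpha>_antimono: "\<And>t. \<alpha> (Suc t) \<le> \<alpha> t"
    and \<alpha>_sq: "summable (\<lambda>t. (\<alpha> t)\<^sup>2)" and \<rho>: "0 \<le> \<rho>" "\<rho> < 1"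
    and p: "\<And>t. stochastic_vec m (p t)"
    and e: "\<And>t j. j < m \<Longrightarrow> \<bar>e t j\<bar> \<le> \<rho> ^ t * S + C * (\<Sum>r\<in>{1..t}. \<alpha> (r - 1) * \<rho> ^ (t - r))"
  shows "summable (\<lambda>t. \<alpha> t * (\<Sum>j<m. p t j * \<bar>e t j\<bar>))"
proof (rule summable_comparison_test'[where N = 0])
  show "summable (\<lambda>t. \<alpha> 0 * \<bar>S\<bar> * \<rho> ^ t + C * (\<alpha> t * (\<Sum>r\<in>{1..t}. \<alpha> (r - 1) * \<rho> ^ (t - r))))"
    using summable_mult_geometric_convolution[OF \<alpha>_nonneg \<alpha>_antimono \<alpha>_sq \<rho>] \<rho>
    by (intro summable_add summable_mult summable_geometric) auto
  fix t
  have "\<alpha> t \<le> \<alpha> 0" by (rule lift_Suc_antimono_le[of \<alpha>, OF \<alpha>_antimono]) simp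
  then have "\<alpha> t * (\<rho> ^ t * S) \<le> \<alpha> 0 * \<bar>S\<bar> * \<rho> ^ t"
    using \<alpha>_nonneg \<rho> by (auto simp: mult_ac intro!: mult_mono)
  moreover have "(\<Sum>j<m. p t j * \<bar>e t j\<bar>) \<le> \<rho> ^ t * S + C * (\<Sum>r\<in>{1..t}. \<alpha> (r - 1) * \<rho> ^ (t - r))"
    using p e by (rule stochastic_vec_weighted_le)
  moreover have "0 \<le> (\<Sum>j<m. p t j * \<bar>e t j\<bar>)"
    using stochastic_vec_bounds(1)[OF p] by (intro sum_nonneg) simp
  ultimately show "norm (\<alpha> t * (\<Sum>j<m. p t j * \<bar>e t j\<bar>))
      \<le> \<alpha> 0 * \<bar>S\<bar> * \<rho> ^ t + C * (\<alpha> t * (\<Sum>r\<in>{1..t}. \<alpha> (r - 1) * \<rho> ^ (t - r)))"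
    using \<alpha>_nonneg[of t] mult_left_mono[of _ _ "\<alpha> t"] by (fastforce simp: algebra_simps)
qed

theorem lemma8:
  fixes n k m :: nat
    and L \<beta> :: real and \<tau> :: nat
    and A :: "nat \<Rightarrow> nat \<Rightarrow> real"
    and h :: "nat \<Rightarrow> real \<Rightarrow> real"
    and \<alpha> :: "nat \<Rightarrow> real"
    and M :: "nat \<Rightarrow> nat \<Rightarrow> nat \<Rightarrow> real"
    and x d :: "nat \<Rightarrow> nat \<Rightarrow> real"
    and \<pi> :: "nat \<Rightarrow> nat \<Rightarrow> real"
    and y :: "nat \<Rightarrow> real"
  assumes m_le: "m \<le> n"
    and A_nonneg: "\<forall>j<k. \<forall>i<n. 0 \<le> A j i"
    and A_cols: "\<forall>i<n. (\<Sum>j<k. A j i) = 1"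
    and h_adm: "\<forall>j<k. admissible L (h j)"
    and alpha_nonneg: "\<forall>t. 0 \<le> \<alpha> t"
    and alpha_antimono: "\<forall>t. \<alpha> (Suc t) \<le> \<alpha> t"
    and alpha_div: "\<not> summable \<alpha>"
    and alpha_sq: "summable (\<lambda>t. (\<alpha> t)\<^sup>2)"
    and subgrad: "\<forall>t. \<forall>i<m. subgradient (\<lambda>z. \<Sum>j<k. A j i * h j z) (x t i) (d t i)"
    and M_stoch: "\<forall>t. row_stochastic m (M t)"
    and dyn: "\<forall>t. \<forall>i<m. x (Suc t) i = (\<Sum>j<m. M t i j * x t j) - \<alpha> t * d t i"
    and beta: "0 < \<beta>" "\<beta> < 1"
    and tau: "1 \<le> \<tau>"
    and pi_stoch: "\<forall>r. stochastic_vec m (\<pi> r)"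
    and Phi_lim: "\<forall>r. \<forall>i<m. \<forall>j<m. (\<lambda>t. Phi m M t r i j) \<longlonglongrightarrow> \<pi> r j"
    and Phi_rate: "\<forall>r t. r \<le> t \<longrightarrow> (\<forall>i<m. \<forall>j<m.
         \<bar>Phi m M t r i j - \<pi> r j\<bar> \<le>
           (1 - \<beta> ^ (\<tau> * m)) ^ nat \<lceil>real (t - r + 1) / real (\<tau> * m)\<rceil>)"
    and y_def: "\<forall>t. y t = (\<Sum>j<m. \<pi> 0 j * x 0 j)
                 - (\<Sum>r\<in>{1..t}. \<alpha> (r - 1) * (\<Sum>j<m. \<pi> r j * d (r - 1) j))"
  shows "summable (\<lambda>t. \<alpha> t * (\<Sum>j<m. \<pi> (Suc t) j * \<bar>y t - x t j\<bar>))"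
proof (cases "m = 0")
  case True
  then show ?thesis by simp
next
  case False
  define \<nu> where "\<nu> = \<tau> * m"
  define \<rho> where "\<rho> = root \<nu> (1 - \<beta> ^ \<nu>)"
  have \<nu>: "0 < \<nu>" using tau False by (simp add: \<nu>_def)
  have \<gamma>: "0 \<le> 1 - \<beta> ^ \<nu>" "1 - \<beta> ^ \<nu> \<le> 1"
    using beta by (simp_all add: power_le_one)
  have \<rho>: "0 \<le> \<rho>" "\<rho> < 1"
    using \<nu> \<gamma> beta by (simp_all add: \<rho>_def)
  have rate: "\<bar>prodM m M r l i j - \<pi> r j\<bar> \<le> \<rho> ^ l" if "i < m" "j < m" for r l i j
    using prodM_converges_geometrically[OF Phi_rate[folded \<nu>_def] _ \<gamma> \<nu> that] pi_stoch
    by (simp add: \<rho>_def)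
  have d_bound: "\<bar>d t i\<bar> \<le> L" if "i < m" for t i
  proof (rule subgradient_abs_le_lipschitz)
    have "(\<Sum>j<k. A j i * L)-lipschitz_on UNIV (\<lambda>z. \<Sum>j<k. A j i * h j z)"
      using A_nonneg h_adm that m_le by (intro lipschitz_on_weighted_sum) (auto simp: admissible_def)
    then show "L-lipschitz_on UNIV (\<lambda>z. \<Sum>j<k. A j i * h j z)"
      using A_cols that m_le by (simp flip: sum_distrib_right)
    show "subgradient (\<lambda>z. \<Sum>j<k. A j i * h j z) (x t i) (d t i)"
      using subgrad that by blast
  qed
  show ?thesis
    using alpha_nonneg alpha_antimono alpha_sq \<rho> pi_stoch
      consensus_deviation_bound[OF dyn rate d_bound] y_def
    by (intro summable_weighted_deviation[where \<rho> = \<rho>]) auto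
qed

end
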